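(* Let $\mathcal{M}$ be an episodic MDP with rewards in $[0,1]$, known transitions, and expert policy $\pi^{\operatorname{E}}$. Let $\widetilde d_h:\mathcal{S}\times\mathcal{A}\to\mathbb{R}$, $h\in[H]$, satisfy $\sum_{h=1}^H\|\widetilde d_h-d_h^{\pi^{\operatorname{E}}}\|_1\le\varepsilon_{\operatorname{EST}}$, and let $\bar\pi$ satisfy $\sum_{h=1}^H\|d_h^{\bar\pi}-\widetilde d_h\|_1\le\min_{\pi\in\Pi}\sum_{h=1}^H\|d_h^\pi-\widetilde d_h\|_1+\varepsilon_{\mathrm{opt}}$. Then $V^{\pi^{\operatorname{E}}}-V^{\bar\pi}\le\varepsilon_{\mathrm{opt}}+2\varepsilon_{\operatorname{EST}}$.
   Context: Episodic MDP $(\mathcal{S},\mathcal{A},P,r,H,\rho)$ with finite $\mathcal{S},\mathcal{A}$, rewards $r_h:\mathcal{S}\times\mathcal{A}\to[0,1]$. $\Pi$ is the set of non-stationary policies $\pi_h:\mathcal{S}\to\Delta(\mathcal{A})$; $d_h^\pi(s,a)$ is the probability that $(s_h,a_h)=(s,a)$ under $\pi$ in $\mathcal{M}$; $V^\pi=\sum_{h}\sum_{(s,a)}d_h^\pi(s,a)r_h(s,a)$; $\|\cdot\|_1$ is the $\ell_1$ norm over $\mathcal{S}\times\mathcal{A}$. *)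

theory Defs
  imports "HOL-Analysis.Analysis"
begin

text \<open>Steps are indexed 0,...,H-1 (corresponding to 1,...,H in the paper).\<close>

definition is_dist :: "('x::finite \<Rightarrow> real) \<Rightarrow> bool" where
  "is_dist p \<longleftrightarrow> (\<forall>x. 0 \<le> p x) \<and> (\<Sum>x\<in>UNIV. p x) = 1"

definition valid_mdp ::
  "nat \<Rightarrow> (nat \<Rightarrow> 's::finite \<Rightarrow> 'a::finite \<Rightarrow> 's \<Rightarrow> real) \<Rightarrow> ('s \<Rightarrow> real) \<Rightarrow> bool" where
  "valid_mdp H P \<rho> \<longleftrightarrow> is_dist \<rho> \<and> (\<forall>h<H. \<forall>s a. is_dist (P h s a))"

definition policies :: "nat \<Rightarrow> (nat \<Rightarrow> 's::finite \<Rightarrow> 'a::finite \<Rightarrow> real) set" where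
  "policies H = {\<pi>. \<forall>h<H. \<forall>s. is_dist (\<pi> h s)}"

text \<open>State-action occupancy measure d_h^pi(s,a) = Pr[(s_h,a_h) = (s,a)].\<close>
fun occ :: "(nat \<Rightarrow> 's::finite \<Rightarrow> 'a::finite \<Rightarrow> 's \<Rightarrow> real) \<Rightarrow> ('s \<Rightarrow> real)
            \<Rightarrow> (nat \<Rightarrow> 's \<Rightarrow> 'a \<Rightarrow> real) \<Rightarrow> nat \<Rightarrow> 's \<Rightarrow> 'a \<Rightarrow> real" where
  "occ P \<rho> \<pi> 0 s a = \<rho> s * \<pi> 0 s a"
| "occ P \<rho> \<pi> (Suc h) s' a' =
     (\<Sum>s\<in>UNIV. \<Sum>a\<in>UNIV. occ P \<rho> \<pi> h s a * P h s a s') * \<pi> (Suc h) s' a'"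

definition l1 :: "('s::finite \<Rightarrow> 'a::finite \<Rightarrow> real) \<Rightarrow> real" where
  "l1 f = (\<Sum>s\<in>UNIV. \<Sum>a\<in>UNIV. \<bar>f s a\<bar>)"

definition mdp_value ::
  "nat \<Rightarrow> (nat \<Rightarrow> 's::finite \<Rightarrow> 'a::finite \<Rightarrow> 's \<Rightarrow> real) \<Rightarrow> ('s \<Rightarrow> real)
   \<Rightarrow> (nat \<Rightarrow> 's \<Rightarrow> 'a \<Rightarrow> real) \<Rightarrow> (nat \<Rightarrow> 's \<Rightarrow> 'a \<Rightarrow> real) \<Rightarrow> real" where
  "mdp_value H P \<rho> r \<pi> = (\<Sum>h<H. \<Sum>s\<in>UNIV. \<Sum>a\<in>UNIV. occ P \<rho> \<pi> h s a * r h s a)"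

end

theory Submission
  imports Defs
begin

text \<open>The value is linear in the occupancy measures and rewards lie in [0,1], so
  V(\<pi>E) - V(\<pi>bar) is at most the summed l1 distance between the occupancies of \<pi>E and
  \<pi>bar. Passing through the estimate dt by the triangle inequality, the distance from
  dt to \<pi>bar is within \<epsilon>opt of that from dt to \<pi>E (compare \<pi>bar with the feasible
  policy \<pi>E), and the latter is at most \<epsilon>EST, which gives \<epsilon>opt + 2 \<epsilon>EST.\<close>

lemma l1_diff_commute: "l1 (\<lambda>s a. f s a - g s a) = l1 (\<lambda>s a. g s a - f s a)"
  by (simp add: l1_def abs_minus_commute)

lemma l1_diff_triangle:
  "l1 (\<lambda>s a. f s a - g s a) \<le> l1 (\<lambda>s a. f s a - k s a) + l1 (\<lambda>s a. k s a - g s a)"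
proof -
  have "\<bar>f s a - g s a\<bar> \<le> \<bar>f s a - k s a\<bar> + \<bar>k s a - g s a\<bar>" for s a
    by (rule order.trans[OF _ abs_triangle_ineq]) simp
  then show ?thesis
    unfolding l1_def sum.distrib[symmetric] by (intro sum_mono)
qed

lemma weighted_sum_diff_le_l1:
  fixes f g w :: "'s::finite \<Rightarrow> 'a::finite \<Rightarrow> real"
  assumes "\<And>s a. 0 \<le> w s a" and "\<And>s a. w s a \<le> 1"
  shows "(\<Sum>s\<in>UNIV. \<Sum>a\<in>UNIV. f s a * w s a) - (\<Sum>s\<in>UNIV. \<Sum>a\<in>UNIV. g s a * w s a)
           \<le> l1 (\<lambda>s a. f s a - g s a)"
proof -
  have "(f s a - g s a) * w s a \<le> \<bar>f s a - g s a\<bar>" for s a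
  proof -
    have "(f s a - g s a) * w s a \<le> \<bar>f s a - g s a\<bar> * w s a"
      using assms(1) by (intro mult_right_mono) auto
    also have "\<dots> \<le> \<bar>f s a - g s a\<bar>"
      using assms by (intro mult_left_le) auto
    finally show ?thesis .
  qed
  then show ?thesis
    unfolding l1_def sum_subtractf[symmetric] left_diff_distrib[symmetric]
    by (intro sum_mono)
qed

lemma mdp_value_diff_le_occ_l1:
  assumes "\<forall>h<H. \<forall>s a. 0 \<le> r h s a \<and> r h s a \<le> 1"
  shows "mdp_value H P \<rho> r \<pi>1 - mdp_value H P \<rho> r \<pi>2
           \<le> (\<Sum>h<H. l1 (\<lambda>s a. occ P \<rho> \<pi>1 h s a - occ P \<rho> \<pi>2 h s a))"
proof -
  have "mdp_value H P \<rho> r \<pi>1 - mdp_value H P \<rho> r \<pi>2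
          = (\<Sum>h<H. (\<Sum>s\<in>UNIV. \<Sum>a\<in>UNIV. occ P \<rho> \<pi>1 h s a * r h s a)
                     - (\<Sum>s\<in>UNIV. \<Sum>a\<in>UNIV. occ P \<rho> \<pi>2 h s a * r h s a))"
    by (simp add: mdp_value_def sum_subtractf)
  also have "\<dots> \<le> (\<Sum>h<H. l1 (\<lambda>s a. occ P \<rho> \<pi>1 h s a - occ P \<rho> \<pi>2 h s a))"
    using assms by (intro sum_mono weighted_sum_diff_le_l1) auto
  finally show ?thesis .
qed

theorem lemma1:
  fixes H :: nat
    and P :: "nat \<Rightarrow> 's::finite \<Rightarrow> 'a::finite \<Rightarrow> 's \<Rightarrow> real"
    and \<rho> :: "'s \<Rightarrow> real"
    and r :: "nat \<Rightarrow> 's \<Rightarrow> 'a \<Rightarrow> real"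
    and \<pi>E \<pi>bar :: "nat \<Rightarrow> 's \<Rightarrow> 'a \<Rightarrow> real"
    and dt :: "nat \<Rightarrow> 's \<Rightarrow> 'a \<Rightarrow> real"
    and \<epsilon>EST \<epsilon>opt :: real
  assumes mdp: "valid_mdp H P \<rho>"
    and rew: "\<forall>h<H. \<forall>s a. 0 \<le> r h s a \<and> r h s a \<le> 1"
    and expert: "\<pi>E \<in> policies H"
    and pibar: "\<pi>bar \<in> policies H"
    and est: "(\<Sum>h<H. l1 (\<lambda>s a. dt h s a - occ P \<rho> \<pi>E h s a)) \<le> \<epsilon>EST"
    and opt: "\<forall>\<pi>\<in>policies H.
                (\<Sum>h<H. l1 (\<lambda>s a. occ P \<rho> \<pi>bar h s a - dt h s a))
                  \<le> (\<Sum>h<H. l1 (\<lambda>s a. occ P \<rho> \<pi> h s a - dt h s a)) + \<epsilon>opt"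
  shows "mdp_value H P \<rho> r \<pi>E - mdp_value H P \<rho> r \<pi>bar \<le> \<epsilon>opt + 2 * \<epsilon>EST"
proof -
  let ?dE = "occ P \<rho> \<pi>E" and ?db = "occ P \<rho> \<pi>bar"
  let ?dist_E = "\<Sum>h<H. l1 (\<lambda>s a. dt h s a - ?dE h s a)"
  have dist_E_commute: "(\<Sum>h<H. l1 (\<lambda>s a. ?dE h s a - dt h s a)) = ?dist_E"
    by (intro sum.cong refl l1_diff_commute)
  have "mdp_value H P \<rho> r \<pi>E - mdp_value H P \<rho> r \<pi>bar
          \<le> (\<Sum>h<H. l1 (\<lambda>s a. ?dE h s a - ?db h s a))"
    using rew by (rule mdp_value_diff_le_occ_l1)
  also have "\<dots> \<le> (\<Sum>h<H. l1 (\<lambda>s a. ?dE h s a - dt h s a) + l1 (\<lambda>s a. dt h s a - ?db h s a))"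
    by (intro sum_mono l1_diff_triangle)
  also have "\<dots> = ?dist_E + (\<Sum>h<H. l1 (\<lambda>s a. dt h s a - ?db h s a))"
    by (simp add: sum.distrib dist_E_commute)
  also have "(\<Sum>h<H. l1 (\<lambda>s a. dt h s a - ?db h s a)) \<le> ?dist_E + \<epsilon>opt"
  proof -
    have "(\<Sum>h<H. l1 (\<lambda>s a. dt h s a - ?db h s a)) = (\<Sum>h<H. l1 (\<lambda>s a. ?db h s a - dt h s a))"
      by (intro sum.cong refl l1_diff_commute)
    with opt expert dist_E_commute show ?thesis
      by auto
  qed
  finally show ?thesis
    using est by linarith
qed

end
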